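(* Let $c$ be a joint choice on $\mathfrak{M}_Q\subseteq\prod_{q\in Q}2^{X_q}$ and let $S,T\subseteq Q$ be subsets with $S\cap T\neq\emptyset$. If $c$ is both $S$-separable and $T$-separable, and $\mathfrak{M}_Q$ satisfies menus betweenness with respect to $S$ and $T$, then $c$ is $(S\cap T)$-separable.
   Context: Let $Q=\{1,\dots,n\}$ with $n\ge 2$ be a finite set of dimensions. For each $q\in Q$, $X_q$ is a nonempty finite set, and $2^{X_q}$ denotes the family of nonempty subsets of $X_q$. A (multidimensional) menu is a tuple $A_Q=(A_q)_{q\in Q}\in\prod_{q\in Q}2^{X_q}$; its alternatives are the elements $x_Q=(x_q)_{q\in Q}$ of $\prod_{q\in Q}A_q$. Let $\mathfrak{M}_Q\subseteq\prod_{q\in Q}2^{X_q}$ be a nonempty family of menus. A joint choice on $\mathfrak{M}_Q$ is a map $c$ assigning to each $A_Q\in\mathfrak{M}_Q$ a set $c(A_Q)$ with $\emptyset\neq c(A_Q)\subseteq\prod_{q\in Q}A_q$. For nonempty $S\subseteq Q$, write $-S=Q\setminus S$, $x_S=(x_q)_{q\in S}$, and $\pi_S$ for the projection $x_Q\mapsto x_S$ from $\prod_{q\in Q}X_q$ to $\prod_{q\in S}X_q$, extended to sets of alternatives by taking images, and to menus by $\pi_S(A_Q)=A_S:=(A_q)_{q\in S}$; set $\pi_S(\mathfrak{M}_Q)=\{\pi_S(A_Q):A_Q\in\mathfrak{M}_Q\}$. For $A_S=(A_q)_{q\in S}$ and $B_{-S}=(B_q)_{q\in -S}$, $(A_S,B_{-S})$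 denotes the menu whose $q$-component is $A_q$ for $q\in S$ and $B_q$ for $q\in -S$. A joint choice $c$ on $\mathfrak{M}_Q$ is $S$-separable (for nonempty $S\subseteq Q$) if $\pi_S(c(A_S,B_{-S}))=\pi_S(c(A_S,C_{-S}))$ for all $A_S\in\pi_S(\mathfrak{M}_Q)$ and $B_{-S},C_{-S}\in\pi_{-S}(\mathfrak{M}_Q)$ such that $(A_S,B_{-S}),(A_S,C_{-S})\in\mathfrak{M}_Q$ (for $S=Q$ this condition is vacuous). For nonempty $S,T\subseteq Q$, the family $\mathfrak{M}_Q$ satisfies menus betweenness with respect to $S$ and $T$ if for all $A_Q,B_Q\in\mathfrak{M}_Q$ with $\pi_{S\cap T}(A_Q)=\pi_{S\cap T}(B_Q)$ there is $E_Q\in\mathfrak{M}_Q$ with $\pi_S(E_Q)=\pi_S(A_Q)$ and $\pi_T(E_Q)=\pi_T(B_Q)$. *)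

theory Defs
  imports "HOL-Library.FuncSet"
begin

text \<open>An alternative is an extensional function on Q
(element of PiE Q), a menu is an extensional function on Q assigning to each
dimension q a subset of X q.\<close>

definition dims :: "nat \<Rightarrow> nat set" where
  "dims n = {1..n}"

definition menus_space :: "nat \<Rightarrow> (nat \<Rightarrow> 'a set) \<Rightarrow> (nat \<Rightarrow> 'a set) set" where
  "menus_space n X = PiE (dims n) (\<lambda>q. {B. B \<subseteq> X q \<and> B \<noteq> {}})"

definition alternatives :: "nat \<Rightarrow> (nat \<Rightarrow> 'a set) \<Rightarrow> (nat \<Rightarrow> 'a) set" where
  "alternatives n A = PiE (dims n) A"

definition joint_choice ::
  "nat \<Rightarrow> (nat \<Rightarrow> 'a set) set \<Rightarrow> ((nat \<Rightarrow> 'a set) \<Rightarrow> (nat \<Rightarrow> 'a) set) \<Rightarrow> bool" where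
  "joint_choice n M c \<longleftrightarrow> (\<forall>A\<in>M. c A \<noteq> {} \<and> c A \<subseteq> alternatives n A)"

definition proj :: "nat set \<Rightarrow> (nat \<Rightarrow> 'b) \<Rightarrow> (nat \<Rightarrow> 'b)" where
  "proj S f = restrict f S"

definition proj_family :: "nat set \<Rightarrow> (nat \<Rightarrow> 'b) set \<Rightarrow> (nat \<Rightarrow> 'b) set" where
  "proj_family S M = proj S ` M"

definition combine :: "nat \<Rightarrow> nat set \<Rightarrow> (nat \<Rightarrow> 'a set) \<Rightarrow> (nat \<Rightarrow> 'a set) \<Rightarrow> (nat \<Rightarrow> 'a set)" where
  "combine n S A B = restrict (\<lambda>q. if q \<in> S then A q else B q) (dims n)"

definition separable ::
  "nat \<Rightarrow> (nat \<Rightarrow> 'a set) set \<Rightarrow> ((nat \<Rightarrow> 'a set) \<Rightarrow> (nat \<Rightarrow> 'a) set) \<Rightarrow> nat set \<Rightarrow> bool" where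
  "separable n M c S \<longleftrightarrow>
     (\<forall>A\<in>proj_family S M. \<forall>B\<in>proj_family (dims n - S) M. \<forall>C\<in>proj_family (dims n - S) M.
        combine n S A B \<in> M \<longrightarrow> combine n S A C \<in> M \<longrightarrow>
        proj S ` c (combine n S A B) = proj S ` c (combine n S A C))"

definition menus_betweenness ::
  "(nat \<Rightarrow> 'a set) set \<Rightarrow> nat set \<Rightarrow> nat set \<Rightarrow> bool" where
  "menus_betweenness M S T \<longleftrightarrow>
     (\<forall>A\<in>M. \<forall>B\<in>M. proj (S \<inter> T) A = proj (S \<inter> T) B \<longrightarrow>
        (\<exists>E\<in>M. proj S E = proj S A \<and> proj T E = proj T B))"

end

theory Submission
  imports Defs
begin

text \<open>Separability says that the projection of the choice onto \<open>S\<close> depends only on the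
projection of the menu onto \<open>S\<close>. Given menus \<open>F\<close>, \<open>G\<close> agreeing on \<open>S \<inter> T\<close>, betweenness
yields a menu \<open>E\<close> agreeing with \<open>F\<close> on \<open>S\<close> and with \<open>G\<close> on \<open>T\<close>; projecting the
\<open>S\<close>-separability identity for \<open>E, F\<close> and the \<open>T\<close>-separability identity for \<open>E, G\<close>
further onto \<open>S \<inter> T\<close> links \<open>c F\<close> and \<open>c G\<close> through \<open>c E\<close>.\<close>

lemma combine_proj_self:
  assumes "F \<in> extensional (dims n)"
  shows "combine n S (proj S F) (proj (dims n - S) F) = F"
  using assms unfolding combine_def proj_def
  by (auto simp: restrict_def extensional_def fun_eq_iff)

lemma proj_combine_eq:
  "proj S (combine n S A B) = proj S (combine n S A C)"
  unfolding combine_def proj_def by (auto simp: restrict_def fun_eq_iff)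

lemma proj_image_proj:
  assumes "U \<subseteq> S"
  shows "proj U ` proj S ` Z = proj U ` Z"
proof -
  have "proj U \<circ> proj S = proj U"
    using assms by (auto simp: proj_def restrict_def fun_eq_iff)
  then show ?thesis
    by (metis image_comp)
qed

lemma separable_iff_proj_eq:
  assumes ext: "M \<subseteq> extensional (dims n)"
  shows "separable n M c S \<longleftrightarrow>
    (\<forall>F\<in>M. \<forall>G\<in>M. proj S F = proj S G \<longrightarrow> proj S ` c F = proj S ` c G)"
proof
  assume sep: "separable n M c S"
  show "\<forall>F\<in>M. \<forall>G\<in>M. proj S F = proj S G \<longrightarrow> proj S ` c F = proj S ` c G"
  proof (intro ballI impI)
    fix F G
    assume F: "F \<in> M" and G: "G \<in> M" and eq: "proj S F = proj S G"
    have F_combine: "combine n S (proj S F) (proj (dims n - S) F) = F"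
      using F ext combine_proj_self by blast
    have G_combine: "combine n S (proj S F) (proj (dims n - S) G) = G"
      using G ext combine_proj_self eq by (metis subsetD)
    show "proj S ` c F = proj S ` c G"
      using sep F G F_combine G_combine unfolding separable_def proj_family_def
      by (metis image_eqI)
  qed
next
  assume "\<forall>F\<in>M. \<forall>G\<in>M. proj S F = proj S G \<longrightarrow> proj S ` c F = proj S ` c G"
  then show "separable n M c S"
    unfolding separable_def using proj_combine_eq by blast
qed

lemma separable_Int:
  assumes ext: "M \<subseteq> extensional (dims n)"
    and sep_S: "separable n M c S" and sep_T: "separable n M c T"
    and betw: "menus_betweenness M S T"
  shows "separable n M c (S \<inter> T)"
  unfolding separable_iff_proj_eq[OF ext]
proof (intro ballI impI)
  fix F G
  assume F: "F \<in> M" and G: "G \<in> M" and eq: "proj (S \<inter> T) F = proj (S \<inter> T) G"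
  obtain E where E: "E \<in> M" "proj S E = proj S F" "proj T E = proj T G"
    using betw F G eq unfolding menus_betweenness_def by blast
  have "proj S ` c E = proj S ` c F"
    using sep_S E F unfolding separable_iff_proj_eq[OF ext] by blast
  then have EF: "proj (S \<inter> T) ` c E = proj (S \<inter> T) ` c F"
    using proj_image_proj[of "S \<inter> T" S] by (metis inf_le1)
  have "proj T ` c E = proj T ` c G"
    using sep_T E G unfolding separable_iff_proj_eq[OF ext] by blast
  then have EG: "proj (S \<inter> T) ` c E = proj (S \<inter> T) ` c G"
    using proj_image_proj[of "S \<inter> T" T] by (metis inf_le2)
  show "proj (S \<inter> T) ` c F = proj (S \<inter> T) ` c G"
    using EF EG by simp
qed

theorem mainTheorem2:
  fixes n :: nat
    and X :: "nat \<Rightarrow> 'a set"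
    and M :: "(nat \<Rightarrow> 'a set) set"
    and c :: "(nat \<Rightarrow> 'a set) \<Rightarrow> (nat \<Rightarrow> 'a) set"
    and S T :: "nat set"
  assumes "n \<ge> 2"
    and "\<forall>q\<in>dims n. finite (X q) \<and> X q \<noteq> {}"
    and "M \<noteq> {}" and "M \<subseteq> menus_space n X"
    and "joint_choice n M c"
    and "S \<subseteq> dims n" and "T \<subseteq> dims n" and "S \<inter> T \<noteq> {}"
    and "separable n M c S" and "separable n M c T"
    and "menus_betweenness M S T"
  shows "separable n M c (S \<inter> T)"
proof -
  have "M \<subseteq> extensional (dims n)"
    using \<open>M \<subseteq> menus_space n X\<close> by (auto simp: menus_space_def PiE_def)
  then show ?thesis
    using separable_Int \<open>separable n M c S\<close> \<open>separable n M c T\<close> \<open>menus_betweenness M S T\<close>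
    by blast
qed

end
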